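(* For every $n>6$, the sensitivity to synchronism of elementary cellular automaton rule $128$ satisfies $\mu(f_{128,n})=\dfrac{3^n-2^{n+1}-10n+2}{3^n-2^{n+1}+2}$.
   Context: Cells are indexed by $\mathbb{Z}_n=\{0,\dots,n-1\}$, indices modulo $n$. Rule $128$ has local rule $r_{128}(x_1,x_2,x_3)=x_1\wedge x_2\wedge x_3$ and global function $f_{128,n}(x)_i=r_{128}(x_{i-1},x_i,x_{i+1})$. An update schedule is an ordered partition $\Delta=(\Delta_1,\dots,\Delta_k)$ of $\mathbb{Z}_n$ into nonempty blocks; $\mathcal{P}_n$ is the set of them. For a block $B$ let $f^{(B)}(x)_i=f_{128,n}(x)_i$ if $i\in B$ and $x_i$ otherwise; $f^{(\Delta)}_{128,n}=f^{(\Delta_k)}\circ\cdots\circ f^{(\Delta_1)}$. The dynamics of $\Delta$ is the transition digraph with arcs $(x,f^{(\Delta)}_{128,n}(x))$; $\mathcal{D}(f_{128,n})$ is the set of distinct dynamics over $\Delta\in\mathcal{P}_n$. The sensitivity to synchronism is $\mu(f_{128,n})=|\mathcal{D}(f_{128,n})|/(3^n-2^{n+1}+2)$. *)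

theory Defs
  imports Complex_Main
begin

definition configs :: "nat \<Rightarrow> (nat \<Rightarrow> bool) set" where
  "configs n = {x. \<forall>i. n \<le> i \<longrightarrow> \<not> x i}"

definition r128 :: "bool \<Rightarrow> bool \<Rightarrow> bool \<Rightarrow> bool" where
  "r128 a b c = (a \<and> b \<and> c)"

definition f128 :: "nat \<Rightarrow> (nat \<Rightarrow> bool) \<Rightarrow> (nat \<Rightarrow> bool)" where
  "f128 n x = (\<lambda>i. if i < n then r128 (x ((i + n - 1) mod n)) (x i) (x ((i + 1) mod n)) else x i)"

definition block_update :: "nat \<Rightarrow> nat set \<Rightarrow> (nat \<Rightarrow> bool) \<Rightarrow> (nat \<Rightarrow> bool)" where
  "block_update n B x = (\<lambda>i. if i \<in> B then f128 n x i else x i)"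

text \<open>Schedule (Delta_1,...,Delta_k): apply Delta_1 first, Delta_k last.\<close>
definition sched_update :: "nat \<Rightarrow> nat set list \<Rightarrow> (nat \<Rightarrow> bool) \<Rightarrow> (nat \<Rightarrow> bool)" where
  "sched_update n D x = fold (block_update n) D x"

definition ordered_partitions :: "nat \<Rightarrow> nat set list set" where
  "ordered_partitions n = {D. (\<forall>B \<in> set D. B \<noteq> {}) \<and>
      (\<forall>i j. i < length D \<and> j < length D \<and> i \<noteq> j \<longrightarrow> D ! i \<inter> D ! j = {}) \<and>
      \<Union> (set D) = {..<n}}"

definition dynamics :: "nat \<Rightarrow> nat set list \<Rightarrow> ((nat \<Rightarrow> bool) \<times> (nat \<Rightarrow> bool)) set" where
  "dynamics n D = {(x, sched_update n D x) | x. x \<in> configs n}"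

definition all_dynamics :: "nat \<Rightarrow> ((nat \<Rightarrow> bool) \<times> (nat \<Rightarrow> bool)) set set" where
  "all_dynamics n = dynamics n ` ordered_partitions n"

definition sensitivity :: "nat \<Rightarrow> real" where
  "sensitivity n = real (card (all_dynamics n)) / (3 ^ n - 2 ^ (n + 1) + 2)"

end

theory Submission
  imports Defs "HOL-Library.FuncSet"
begin

(*
  Rule 128 is a conjunction, so after any schedule each cell holds the conjunction of the initial
  values over a set of cells, and two schedules have the same dynamics iff these dependency sets
  agree (test on configurations with a single 0). The dependency set of cell i depends only on the
  labeling of the edges of the ring by the relative update order of neighbouring cells: it is the
  interval extending from i along the run of edges oriented towards i on either side, and the
  whole ring once these runs are long. Labelings coming from schedules are those without a
  directed cycle; there are 3^n - 2^(n+1) + 2 of them.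

  For n > 6, two such labelings give the same intervals only if one of them has a label 0 next to
  n - 3 edges all oriented the same way, and the 0 may be replaced by the opposite orientation.
  There are 5 such labelings for each edge and side, 10 n in all, and each has a unique twin
  without this defect, so exactly 10 n labelings are lost.
*)

definition run_length :: "(nat \<Rightarrow> bool) \<Rightarrow> nat" where
  "run_length P = (LEAST m. \<not> P m)"

lemma run_length_prefix: "k < run_length P \<Longrightarrow> P k"
  unfolding run_length_def using not_less_Least by blast

lemma run_length_stop: "\<not> P m \<Longrightarrow> \<not> P (run_length P)"
  unfolding run_length_def by (rule LeastI)

lemma run_length_le: "\<not> P m \<Longrightarrow> run_length P \<le> m"
  unfolding run_length_def by (rule Least_le)

lemma run_length_eqI: "(\<And>k. k < m \<Longrightarrow> P k) \<Longrightarrow> \<not> P m \<Longrightarrow> run_length P = m"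
  unfolding run_length_def by (rule Least_equality) (auto simp: not_le[symmetric])

lemma run_length_ge:
  assumes "\<And>k. k < m \<Longrightarrow> P k" "\<not> P m'"
  shows "m \<le> run_length P"
proof (rule ccontr)
  assume "\<not> m \<le> run_length P"
  then have "P (run_length P)" using assms(1) by simp
  then show False using run_length_stop[of P m', OF assms(2)] by contradiction
qed

lemma run_length_0: "\<not> P 0 \<Longrightarrow> run_length P = 0"
  by (rule run_length_eqI) auto

lemma run_length_Suc: "P 0 \<Longrightarrow> \<not> P m \<Longrightarrow> run_length P = Suc (run_length (\<lambda>k. P (Suc k)))"
proof (rule run_length_eqI)
  fix k assume "P 0" "k < Suc (run_length (\<lambda>k. P (Suc k)))"
  then show "P k" using run_length_prefix[of "k - 1" "\<lambda>k. P (Suc k)"] by (cases k) auto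
next
  assume "P 0" "\<not> P m"
  then obtain m' where "\<not> P (Suc m')" by (cases m) auto
  then show "\<not> P (Suc (run_length (\<lambda>k. P (Suc k))))" by (rule run_length_stop)
qed

lemma cyclic_mono_const:
  fixes t :: "nat \<Rightarrow> 'a::order"
  assumes n: "0 < n" and mono: "\<forall>i<n. t i \<le> t ((i + 1) mod n)"
  shows "\<forall>i<n. t i = t 0"
proof -
  have up: "t i \<le> t j" if "i \<le> j" "j < n" for i j
    using that
  proof (induction j)
    case (Suc j)
    show ?case
    proof (cases "i = Suc j")
      case False
      then have "t i \<le> t j" using Suc by simp
      also have "t j \<le> t (Suc j)" using mono[rule_format, of j] Suc.prems(2) by simp
      finally show ?thesis .
    qed simp
  qed simp
  have last: "t (n - 1) \<le> t 0" using mono[rule_format, of "n - 1"] n by simp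
  show ?thesis
  proof (intro allI impI)
    fix i assume i: "i < n"
    have "t i \<le> t (n - 1)" using up i by simp
    then have "t i \<le> t 0" using last by (rule order.trans)
    moreover have "t 0 \<le> t i" using up i by simp
    ultimately show "t i = t 0" by (rule antisym)
  qed
qed

lemma cyclic_sgn_const:
  fixes t :: "nat \<Rightarrow> int"
  assumes n: "0 < n" and v: "v = 1 \<or> v = -1"
    and miss: "\<forall>i<n. sgn (t ((i + 1) mod n) - t i) \<noteq> v"
  shows "\<forall>i<n. t ((i + 1) mod n) = t i"
proof -
  have "\<forall>i<n. - v * t i \<le> - v * t ((i + 1) mod n)"
    using miss v by (auto simp: sgn_1_neg sgn_1_pos)
  note const = cyclic_mono_const[OF n this]
  show ?thesis
  proof (intro allI impI)
    fix i assume "i < n"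
    moreover have "v \<noteq> 0" using v by auto
    ultimately show "t ((i + 1) mod n) = t i"
      using const[rule_format, of i] const[rule_format, of "(i + 1) mod n"] n by simp
  qed
qed

lemma sgn_diff_sorted_nth:
  fixes vs :: "'a::linordered_idom list"
  assumes "sorted_wrt (<) vs" "k < length vs" "k' < length vs"
  shows "sgn (vs ! k' - vs ! k) = sgn (of_nat k' - of_nat k :: 'a)"
proof (cases k k' rule: linorder_cases)
  case less
  have "vs ! k < vs ! k'" using sorted_wrt_nth_less[OF assms(1) less assms(3)] .
  then show ?thesis using less by (simp add: sgn_if)
next
  case greater
  have "vs ! k' < vs ! k" using sorted_wrt_nth_less[OF assms(1) greater assms(2)] .
  then show ?thesis using greater by (simp add: sgn_if)
qed simp

lemma card_image_Diff_redundant: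
  assumes "finite S" "X \<subseteq> S" "inj_on f (S - X)" "\<And>x. x \<in> X \<Longrightarrow> \<exists>y\<in>S - X. f y = f x"
  shows "card (f ` S) + card X = card S"
proof -
  have "f ` S \<subseteq> f ` (S - X)"
  proof (rule image_subsetI)
    fix x assume "x \<in> S"
    then show "f x \<in> f ` (S - X)" using assms(4)[of x] by (cases "x \<in> X") (auto intro: rev_image_eqI)
  qed
  then have "f ` S = f ` (S - X)" by blast
  then have "card (f ` S) = card (S - X)" using card_image[OF assms(3)] by simp
  moreover have "card X \<le> card S" using card_mono[OF assms(1,2)] .
  then have "card (S - X) + card X = card S"
    using card_Diff_subset[OF finite_subset[OF assms(2,1)] assms(2)] by simp
  ultimately show ?thesis by simp
qed

lemma mod_diff_ne: "0 < m \<Longrightarrow> m < n \<Longrightarrow> (j - int m) mod int n \<noteq> j mod int n"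
proof
  assume m: "0 < m" "m < n" and "(j - int m) mod int n = j mod int n"
  then have "int n dvd int m" by (simp add: mod_eq_dvd_iff)
  then show False using m nat_dvd_not_less by simp
qed

lemma mod_diff_eq_0_nat:
  assumes "x < n" "y < n" "(int x - int y) mod int n = 0"
  shows "x = y"
proof -
  have "int x mod int n = int y mod int n" using assms(3) by (simp add: mod_eq_dvd_iff dvd_eq_mod_eq_0)
  then show ?thesis using assms(1,2) by simp
qed

section \<open>Dependency sets of a schedule\<close>

definition nbhd :: "nat \<Rightarrow> nat set \<Rightarrow> nat \<Rightarrow> nat set" where
  "nbhd n B i = (if i \<in> B \<and> i < n then {(i + n - 1) mod n, i, (i + 1) mod n} else {i})"

definition dep_step :: "nat \<Rightarrow> nat set \<Rightarrow> (nat \<Rightarrow> nat set) \<Rightarrow> nat \<Rightarrow> nat set" where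
  "dep_step n B R i = (\<Union>k\<in>nbhd n B i. R k)"

definition dep :: "nat \<Rightarrow> nat set list \<Rightarrow> nat \<Rightarrow> nat set" where
  "dep n D = fold (dep_step n) D (\<lambda>i. {i})"

lemma fold_block_update_conj:
  assumes "\<And>i. x i = (\<forall>j\<in>R i. y j)"
  shows "fold (block_update n) D x i = (\<forall>j\<in>fold (dep_step n) D R i. y j)"
  using assms
proof (induction D arbitrary: x R)
  case (Cons B D)
  have "block_update n B x = (\<lambda>i. \<forall>j\<in>dep_step n B R i. y j)"
    using Cons.prems by (auto simp: fun_eq_iff block_update_def f128_def r128_def dep_step_def nbhd_def)
  then show ?case using Cons.IH[of "block_update n B x" "dep_step n B R"] by simp
qed simp

lemma sched_update_eq_dep: "sched_update n D x i = (\<forall>j\<in>dep n D i. x j)"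
  unfolding sched_update_def dep_def by (rule fold_block_update_conj) simp

lemma fold_dep_step_outside: "n \<le> i \<Longrightarrow> fold (dep_step n) D R i = R i"
  by (induction D arbitrary: R) (simp_all add: dep_step_def nbhd_def)

lemma dep_outside: "n \<le> i \<Longrightarrow> dep n D i = {i}"
  unfolding dep_def by (simp add: fold_dep_step_outside)

definition conj_dynamics :: "nat \<Rightarrow> (nat \<Rightarrow> nat set) \<Rightarrow> ((nat \<Rightarrow> bool) \<times> (nat \<Rightarrow> bool)) set" where
  "conj_dynamics n W = {(x, \<lambda>i. if i < n then \<forall>j\<in>W i. x j else x i) | x. x \<in> configs n}"

lemma conj_dynamics_cong: "(\<And>i. i < n \<Longrightarrow> W i = W' i) \<Longrightarrow> conj_dynamics n W = conj_dynamics n W'"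
proof -
  assume eq: "\<And>i. i < n \<Longrightarrow> W i = W' i"
  have "(\<lambda>i. if i < n then \<forall>j\<in>W i. x j else x i) = (\<lambda>i. if i < n then \<forall>j\<in>W' i. x j else x i)" for x
    using eq by auto
  then show ?thesis unfolding conj_dynamics_def by simp
qed

lemma dynamics_eq_conj_dynamics: "dynamics n D = conj_dynamics n (dep n D)"
proof -
  have "sched_update n D x = (\<lambda>i. if i < n then \<forall>j\<in>dep n D i. x j else x i)" for x
    by (auto simp: fun_eq_iff sched_update_eq_dep dep_outside)
  then show ?thesis unfolding dynamics_def conj_dynamics_def by simp
qed

lemma conj_dynamics_eq_iff:
  assumes "\<forall>i<n. W i \<subseteq> {..<n}" and "\<forall>i<n. W' i \<subseteq> {..<n}"
  shows "conj_dynamics n W = conj_dynamics n W' \<longleftrightarrow> (\<forall>i<n. W i = W' i)"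
proof
  assume eq: "conj_dynamics n W = conj_dynamics n W'"
  show "\<forall>i<n. W i = W' i"
  proof (intro allI impI)
    fix i assume i: "i < n"
    show "W i = W' i"
    proof (rule ccontr)
      assume "W i \<noteq> W' i"
      then obtain j where j: "j \<in> W i \<longleftrightarrow> j \<notin> W' i" by blast
      then have "j < n" using assms i by blast
      define x where "x = (\<lambda>k. k < n \<and> k \<noteq> j)"
      have "x \<in> configs n" unfolding configs_def x_def by simp
      then have "(x, \<lambda>i. if i < n then \<forall>j\<in>W i. x j else x i) \<in> conj_dynamics n W'"
        using eq unfolding conj_dynamics_def by blast
      then have "(\<lambda>i. if i < n then \<forall>j\<in>W i. x j else x i) = (\<lambda>i. if i < n then \<forall>j\<in>W' i. x j else x i)"
        unfolding conj_dynamics_def by blast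
      then have "(\<forall>k\<in>W i. x k) = (\<forall>k\<in>W' i. x k)"
        using i by (metis (mono_tags))
      then show False using j i assms \<open>j < n\<close> unfolding x_def by blast
    qed
  qed
qed (auto simp: conj_dynamics_def)

section \<open>Labelings of the ring\<close>

text \<open>A labeling assigns to the edge between cells \<open>i\<close> and \<open>(i + 1) mod n\<close> the label \<open>1\<close>,
  \<open>0\<close> or \<open>-1\<close> when cell \<open>i\<close> is updated before, together with, or after cell \<open>i + 1\<close>.
  Realizable labelings are those without a directed cycle around the ring.\<close>

definition labelings :: "nat \<Rightarrow> (nat \<Rightarrow> int) set" where
  "labelings n = PiE {..<n} (\<lambda>_. {-1, 0, 1})"

definition realizable :: "nat \<Rightarrow> (nat \<Rightarrow> int) set" where
  "realizable n = {b \<in> labelings n. (\<forall>i<n. b i = 0) \<or> ((\<exists>i<n. b i = 1) \<and> (\<exists>i<n. b i = -1))}"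

lemma finite_realizable: "finite (realizable n)"
  unfolding realizable_def labelings_def by (simp add: finite_PiE)

lemma labelings_values: "b \<in> labelings n \<Longrightarrow> i < n \<Longrightarrow> b i = -1 \<or> b i = 0 \<or> b i = 1"
  by (auto simp: labelings_def)

definition cell :: "nat \<Rightarrow> int \<Rightarrow> nat" where
  "cell n j = nat (j mod int n)"

definition lbl :: "nat \<Rightarrow> (nat \<Rightarrow> int) \<Rightarrow> int \<Rightarrow> int" where
  "lbl n b j = b (cell n j)"

lemma cell_less: "0 < n \<Longrightarrow> cell n j < n"
  by (simp add: cell_def nat_less_iff)

lemma of_nat_cell: "0 < n \<Longrightarrow> int (cell n j) = j mod int n"
  by (simp add: cell_def)

lemma cell_of_nat [simp]: "i < n \<Longrightarrow> cell n (int i) = i"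
  by (simp add: cell_def)

lemma cell_eq_iff: "0 < n \<Longrightarrow> cell n j = cell n j' \<longleftrightarrow> j mod int n = j' mod int n"
  by (simp add: cell_def eq_nat_nat_iff)

lemma lbl_cong: "j mod int n = j' mod int n \<Longrightarrow> lbl n b j = lbl n b j'"
  by (simp add: lbl_def cell_def)

lemma lbl_of_nat [simp]: "i < n \<Longrightarrow> lbl n b (int i) = b i"
  by (simp add: lbl_def)

lemma lbl_in_labels: "b \<in> labelings n \<Longrightarrow> 0 < n \<Longrightarrow> lbl n b j \<in> {-1, 0, 1}"
  using cell_less[of n j] by (auto simp: lbl_def labelings_def)

lemma lbl_witness: "0 < n \<Longrightarrow> lbl n b j = v \<Longrightarrow> \<exists>i<n. b i = v"
  unfolding lbl_def using cell_less by blast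

lemma lbl_fun_upd: "d < n \<Longrightarrow> lbl n (b(d := v)) j = (if j mod int n = int d then v else lbl n b j)"
  using pos_mod_sign[of "int n" j] unfolding lbl_def cell_def by (auto simp: nat_eq_iff)

lemma lbl_shift_left: "lbl n b (j - (j - i) mod int n) = lbl n b i"
  by (rule lbl_cong) (simp add: mod_diff_right_eq)

lemma lbl_shift_right: "lbl n b (i + (j - i) mod int n) = lbl n b j"
  by (rule lbl_cong) (simp add: mod_add_right_eq)

lemma lbl_offset_right: "0 < n \<Longrightarrow> \<exists>m<n. lbl n b (i + int m) = lbl n b j"
proof -
  assume n: "0 < n"
  define m where "m = nat ((j - i) mod int n)"
  have m: "int m = (j - i) mod int n" using n by (simp add: m_def)
  then have "int m < int n" using n by simp
  then have "m < n" by simp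
  moreover have "(i + int m) mod int n = j mod int n"
    unfolding m by (simp add: mod_add_right_eq)
  ultimately show ?thesis using lbl_cong by blast
qed

lemma lbl_offset_left: "0 < n \<Longrightarrow> \<exists>m<n. lbl n b (i - int m) = lbl n b j"
proof -
  assume n: "0 < n"
  define m where "m = nat ((i - j) mod int n)"
  have m: "int m = (i - j) mod int n" using n by (simp add: m_def)
  then have "int m < int n" using n by simp
  then have "m < n" by simp
  moreover have "(i - int m) mod int n = j mod int n"
    unfolding m by (simp add: mod_diff_right_eq)
  ultimately show ?thesis using lbl_cong by blast
qed

lemma realizable_lbl_ne:
  assumes "b \<in> realizable n" "0 < n" "v \<noteq> 0"
  shows "\<exists>j. lbl n b j \<noteq> v"
proof (cases "\<forall>i<n. b i = 0")
  case True
  then show ?thesis using assms(2,3) lbl_of_nat[of 0 n b] by (intro exI[of _ 0]) simp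
next
  case False
  then obtain i k where "i < n" "b i = 1" "k < n" "b k = -1"
    using assms(1) by (auto simp: realizable_def)
  then have "lbl n b (int i) = 1" "lbl n b (int k) = -1" by simp_all
  then show ?thesis by (cases "v = 1") (auto intro: exI[of _ "int i"] exI[of _ "int k"])
qed

text \<open>Along a run of edges labeled \<open>1\<close> ending at cell \<open>i\<close>, or labeled \<open>-1\<close> starting
  at it, each cell is updated after its predecessor, so the values propagate into cell \<open>i\<close>.\<close>

definition left_run :: "nat \<Rightarrow> (nat \<Rightarrow> int) \<Rightarrow> int \<Rightarrow> nat" where
  "left_run n b i = run_length (\<lambda>m. lbl n b (i - 1 - int m) = 1)"

definition right_run :: "nat \<Rightarrow> (nat \<Rightarrow> int) \<Rightarrow> int \<Rightarrow> nat" where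
  "right_run n b i = run_length (\<lambda>m. lbl n b (i + int m) = -1)"

definition long_left_run :: "nat \<Rightarrow> (nat \<Rightarrow> int) \<Rightarrow> int \<Rightarrow> bool" where
  "long_left_run n b i \<longleftrightarrow> (\<forall>k<n - 3. lbl n b (i - 1 - int k) = 1)"

definition long_right_run :: "nat \<Rightarrow> (nat \<Rightarrow> int) \<Rightarrow> int \<Rightarrow> bool" where
  "long_right_run n b i \<longleftrightarrow> (\<forall>k<n - 3. lbl n b (i + int k) = -1)"

lemma left_run_stop_exists:
  assumes "b \<in> realizable n" "0 < n"
  shows "\<exists>m<n. lbl n b (i - 1 - int m) \<noteq> 1"
proof -
  obtain j where "lbl n b j \<noteq> 1" using realizable_lbl_ne[OF assms, of 1] by auto
  then show ?thesis using lbl_offset_left[OF assms(2), of b "i - 1" j] by auto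
qed

lemma right_run_stop_exists:
  assumes "b \<in> realizable n" "0 < n"
  shows "\<exists>m<n. lbl n b (i + int m) \<noteq> -1"
proof -
  obtain j where "lbl n b j \<noteq> -1" using realizable_lbl_ne[OF assms, of "-1"] by auto
  then show ?thesis using lbl_offset_right[OF assms(2), of b i j] by auto
qed

lemma left_run_prefix: "k < left_run n b i \<Longrightarrow> lbl n b (i - 1 - int k) = 1"
  unfolding left_run_def by (rule run_length_prefix)

lemma right_run_prefix: "k < right_run n b i \<Longrightarrow> lbl n b (i + int k) = -1"
  unfolding right_run_def by (rule run_length_prefix)

lemma right_run_le: "lbl n b (i + int m) \<noteq> -1 \<Longrightarrow> right_run n b i \<le> m"
  unfolding right_run_def by (rule run_length_le)

lemma left_run_0: "lbl n b (i - 1) \<noteq> 1 \<Longrightarrow> left_run n b i = 0"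
  unfolding left_run_def by (rule run_length_0) simp

lemma right_run_0: "lbl n b i \<noteq> -1 \<Longrightarrow> right_run n b i = 0"
  unfolding right_run_def by (rule run_length_0) simp

context
  fixes n :: nat and b :: "nat \<Rightarrow> int"
  assumes b: "b \<in> realizable n" and n: "0 < n"
begin

lemma right_run_less: "right_run n b i < n"
proof -
  obtain m where "m < n" "lbl n b (i + int m) \<noteq> -1" using right_run_stop_exists[OF b n] by blast
  then show ?thesis unfolding right_run_def using run_length_le[of "\<lambda>m. lbl n b (i + int m) = -1"] by fastforce
qed

lemma right_run_stop: "lbl n b (i + int (right_run n b i)) \<noteq> -1"
proof -
  obtain m where "lbl n b (i + int m) \<noteq> -1" using right_run_stop_exists[OF b n] by blast
  then show ?thesis unfolding right_run_def by (rule run_length_stop)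
qed

lemma left_run_ge:
  assumes "\<And>k. k < m \<Longrightarrow> lbl n b (i - 1 - int k) = 1"
  shows "m \<le> left_run n b i"
proof -
  obtain m' where "lbl n b (i - 1 - int m') \<noteq> 1" using left_run_stop_exists[OF b n] by blast
  then show ?thesis unfolding left_run_def by (rule run_length_ge[rotated]) (rule assms)
qed

lemma right_run_ge:
  assumes "\<And>k. k < m \<Longrightarrow> lbl n b (i + int k) = -1"
  shows "m \<le> right_run n b i"
proof -
  obtain m' where "lbl n b (i + int m') \<noteq> -1" using right_run_stop_exists[OF b n] by blast
  then show ?thesis unfolding right_run_def by (rule run_length_ge[rotated]) (rule assms)
qed

lemma left_run_Suc:
  assumes "lbl n b (i - 1) = 1"
  shows "left_run n b i = Suc (left_run n b (i - 1))"
proof -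
  obtain m where "lbl n b (i - 1 - int m) \<noteq> 1" using left_run_stop_exists[OF b n] by blast
  then show ?thesis unfolding left_run_def
    by (subst run_length_Suc[where m = m]) (use assms in \<open>simp_all add: algebra_simps\<close>)
qed

lemma right_run_Suc:
  assumes "lbl n b i = -1"
  shows "right_run n b i = Suc (right_run n b (i + 1))"
proof -
  obtain m where "lbl n b (i + int m) \<noteq> -1" using right_run_stop_exists[OF b n] by blast
  then show ?thesis unfolding right_run_def
    by (subst run_length_Suc[where m = m]) (use assms in \<open>simp_all add: algebra_simps\<close>)
qed

end

lemma left_run_cong:
  assumes "i mod int n = i' mod int n"
  shows "left_run n b i = left_run n b i'"
proof -
  have "lbl n b (i - 1 - int m) = lbl n b (i' - 1 - int m)" for m
    by (rule lbl_cong) (rule mod_diff_cong[OF mod_diff_cong[OF assms refl] refl])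
  then show ?thesis unfolding left_run_def by simp
qed

lemma right_run_cong:
  assumes "i mod int n = i' mod int n"
  shows "right_run n b i = right_run n b i'"
proof -
  have "lbl n b (i + int m) = lbl n b (i' + int m)" for m
    by (rule lbl_cong) (rule mod_add_cong[OF assms refl])
  then show ?thesis unfolding right_run_def by simp
qed

section \<open>Dependency intervals and windows\<close>

text \<open>By \<open>dep_eq_label_dep\<close> below, after a schedule with labeling \<open>b\<close> cell \<open>i\<close> depends on
  the cells of \<open>dep_interval n b i\<close> taken modulo \<open>n\<close>. Unless this interval wraps around the
  whole ring, its two run lengths can be read off from it; \<open>window\<close> records exactly that.\<close>

definition dep_interval :: "nat \<Rightarrow> (nat \<Rightarrow> int) \<Rightarrow> int \<Rightarrow> int set" where
  "dep_interval n b i = {i - int (left_run n b i) - 1 .. i + int (right_run n b i) + 1}"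

definition label_dep :: "nat \<Rightarrow> (nat \<Rightarrow> int) \<Rightarrow> int \<Rightarrow> nat set" where
  "label_dep n b i = cell n ` dep_interval n b i"

definition covers :: "nat \<Rightarrow> (nat \<Rightarrow> int) \<Rightarrow> int \<Rightarrow> bool" where
  "covers n b i \<longleftrightarrow> n \<le> left_run n b i + right_run n b i + 3"

definition window :: "nat \<Rightarrow> (nat \<Rightarrow> int) \<Rightarrow> int \<Rightarrow> (nat \<times> nat) option" where
  "window n b i = (if covers n b i then None else Some (left_run n b i, right_run n b i))"

lemma window_cong: "i mod int n = i' mod int n \<Longrightarrow> window n b i = window n b i'"
  unfolding window_def covers_def by (simp only: left_run_cong[of i n i'] right_run_cong[of i n i'])

lemma window_eq_runs_eq:
  "window n a i = window n b i \<Longrightarrow> \<not> covers n b i \<Longrightarrow>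
    left_run n a i = left_run n b i \<and> right_run n a i = right_run n b i"
  unfolding window_def by (auto split: if_splits)

lemma window_eq_covers_eq: "window n a i = window n b i \<Longrightarrow> covers n a i = covers n b i"
  unfolding window_def by (auto split: if_splits)

lemma covers_long_left_run: "covers n b i \<Longrightarrow> right_run n b i = 0 \<Longrightarrow> long_left_run n b i"
  unfolding covers_def long_left_run_def by (intro allI impI left_run_prefix) simp

lemma covers_long_right_run: "covers n b i \<Longrightarrow> left_run n b i = 0 \<Longrightarrow> long_right_run n b i"
  unfolding covers_def long_right_run_def by (intro allI impI right_run_prefix) simp

lemma dep_interval_rec:
  assumes "b \<in> realizable n" "0 < n"
  shows "dep_interval n b i = {i - 1, i, i + 1}
    \<union> (if lbl n b (i - 1) = 1 then dep_interval n b (i - 1) else {})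
    \<union> (if lbl n b i = -1 then dep_interval n b (i + 1) else {})"
proof -
  have left: "dep_interval n b (i - 1) = {i - int (left_run n b i) - 1 .. i}" if "lbl n b (i - 1) = 1"
    using left_run_Suc[OF assms that] right_run_0[of n b "i - 1"] that by (simp add: dep_interval_def)
  have right: "dep_interval n b (i + 1) = {i .. i + int (right_run n b i) + 1}" if "lbl n b i = -1"
    using right_run_Suc[OF assms that] left_run_0[of n b "i + 1"] that by (simp add: dep_interval_def)
  show ?thesis
    using left right left_run_0[of n b i] right_run_0[of n b i] unfolding dep_interval_def
    by (cases "lbl n b (i - 1) = 1"; cases "lbl n b i = -1") auto
qed

lemma label_dep_cong:
  assumes "i mod int n = i' mod int n"
  shows "label_dep n b i = label_dep n b i'"
proof -
  obtain s where s: "i' = i + int n * s" using assms by (metis mod_eqE mult.commute)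
  have "dep_interval n b i' = (\<lambda>j. j + int n * s) ` dep_interval n b i"
    using left_run_cong[OF assms] right_run_cong[OF assms] unfolding dep_interval_def s
    by (simp add: algebra_simps)
  moreover have "cell n (j + int n * s) = cell n j" for j by (simp add: cell_def)
  ultimately show ?thesis unfolding label_dep_def by (simp add: image_image)
qed

lemma label_dep_subset: "0 < n \<Longrightarrow> label_dep n b i \<subseteq> {..<n}"
  unfolding label_dep_def using cell_less by blast

lemma label_dep_self: "i < n \<Longrightarrow> i \<in> label_dep n b (int i)"
  unfolding label_dep_def dep_interval_def by (rule image_eqI[of _ _ "int i"]) auto

lemma label_dep_covers:
  assumes n: "0 < n" and cov: "covers n b i"
  shows "label_dep n b i = {..<n}"
proof (intro equalityI subsetI)
  fix x assume x: "x \<in> {..<n}"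
  define lo where "lo = i - int (left_run n b i) - 1"
  define j where "j = lo + (int x - lo) mod int n"
  have "lo \<le> j" "j < lo + int n" unfolding j_def using n by auto
  then have "j \<in> dep_interval n b i" using cov unfolding dep_interval_def covers_def lo_def by auto
  moreover have "cell n j = x" using x unfolding j_def cell_def by (simp add: mod_add_right_eq)
  ultimately show "x \<in> label_dep n b i" unfolding label_dep_def by blast
qed (use label_dep_subset[OF n] in blast)

lemma label_dep_not_covers_outside:
  assumes n: "0 < n" and ncov: "\<not> covers n b i"
    and p: "p = i + int (right_run n b i) + 2 \<or> p = i - int (left_run n b i) - 2"
  shows "cell n p \<notin> label_dep n b i"
proof
  assume "cell n p \<in> label_dep n b i"
  then obtain j where j: "j \<in> dep_interval n b i" "p mod int n = j mod int n"
    unfolding label_dep_def using cell_eq_iff[OF n] by blast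
  then have "int n dvd p - j" by (simp add: mod_eq_dvd_iff)
  moreover have "0 < \<bar>p - j\<bar>" "\<bar>p - j\<bar> < int n"
    using j(1) p ncov unfolding dep_interval_def covers_def by auto
  ultimately show False using dvd_imp_le_int[of "p - j" "int n"] by auto
qed

lemma label_dep_eq_imp_not_covers_le:
  assumes n: "0 < n" and eq: "label_dep n b i = label_dep n c i" and ncov: "\<not> covers n c i"
  shows "\<not> covers n b i" "left_run n b i \<le> left_run n c i" "right_run n b i \<le> right_run n c i"
proof -
  let ?r = "i + int (right_run n c i) + 2" and ?l = "i - int (left_run n c i) - 2"
  have miss: "cell n ?r \<notin> label_dep n b i" "cell n ?l \<notin> label_dep n b i"
    using label_dep_not_covers_outside[OF n ncov] eq by auto
  then show "\<not> covers n b i" using label_dep_covers[OF n] cell_less[OF n] by blast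
  show "left_run n b i \<le> left_run n c i"
  proof (rule ccontr)
    assume "\<not> ?thesis"
    then have "?l \<in> dep_interval n b i" unfolding dep_interval_def by auto
    then show False using miss(2) unfolding label_dep_def by blast
  qed
  show "right_run n b i \<le> right_run n c i"
  proof (rule ccontr)
    assume "\<not> ?thesis"
    then have "?r \<in> dep_interval n b i" unfolding dep_interval_def by auto
    then show False using miss(1) unfolding label_dep_def by blast
  qed
qed

lemma label_dep_eq_iff_window_eq:
  assumes n: "0 < n"
  shows "label_dep n b i = label_dep n c i \<longleftrightarrow> window n b i = window n c i"
proof
  assume eq: "label_dep n b i = label_dep n c i"
  show "window n b i = window n c i"
  proof (cases "covers n c i")
    case True
    then have "covers n b i" using label_dep_eq_imp_not_covers_le(1)[OF n eq[symmetric]] by blast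
    then show ?thesis using True by (simp add: window_def)
  next
    case False
    then show ?thesis
      using label_dep_eq_imp_not_covers_le[OF n eq False]
        label_dep_eq_imp_not_covers_le(2,3)[OF n eq[symmetric]] by (simp add: window_def)
  qed
next
  assume "window n b i = window n c i"
  then show "label_dep n b i = label_dep n c i"
    using label_dep_covers[OF n] by (auto simp: window_def label_dep_def dep_interval_def split: if_splits)
qed

lemma cell_pred: "i < n \<Longrightarrow> cell n (int i - 1) = (i + n - 1) mod n"
proof -
  assume i: "i < n"
  have "int ((i + n - 1) mod n) = (int i - 1 + 1 * int n) mod int n"
    using i by (simp add: of_nat_mod of_nat_diff algebra_simps)
  then show ?thesis unfolding cell_def by (metis mod_mult_self1 nat_int)
qed

lemma cell_succ: "cell n (int i + 1) = (i + 1) mod n"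
  unfolding cell_def by (metis nat_int of_nat_Suc of_nat_mod Suc_eq_plus1 add.commute)

lemma label_dep_rec_cells:
  assumes b: "b \<in> realizable n" and i: "i < n"
  defines "l \<equiv> (i + n - 1) mod n" and "r \<equiv> (i + 1) mod n"
  shows "label_dep n b (int i) = {l, i, r}
    \<union> (if b l = 1 then label_dep n b (int l) else {}) \<union> (if b i = -1 then label_dep n b (int r) else {})"
proof -
  have n: "0 < n" using i by simp
  have cells: "cell n (int i - 1) = l" "cell n (int i + 1) = r"
    unfolding l_def r_def using cell_pred[OF i] cell_succ by simp_all
  have "cell n (int i - 1) = cell n (int l)" "cell n (int i + 1) = cell n (int r)"
    using cells n by (simp_all add: l_def r_def)
  then have "label_dep n b (int i - 1) = label_dep n b (int l)" "label_dep n b (int i + 1) = label_dep n b (int r)"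
    using label_dep_cong cell_eq_iff[OF n] by metis+
  moreover have "lbl n b (int i - 1) = b l" using cells by (simp add: lbl_def)
  moreover have "label_dep n b (int i) = cell n ` {int i - 1, int i, int i + 1}
      \<union> (if lbl n b (int i - 1) = 1 then label_dep n b (int i - 1) else {})
      \<union> (if lbl n b (int i) = -1 then label_dep n b (int i + 1) else {})"
    unfolding label_dep_def by (subst dep_interval_rec[OF b n]) (simp add: image_Un)
  ultimately show ?thesis using cells i by simp
qed

section \<open>Schedules and realizable labelings\<close>

definition block_of :: "nat set list \<Rightarrow> nat \<Rightarrow> nat" where
  "block_of D c = (THE k. k < length D \<and> c \<in> D ! k)"

lemma block_of_eq:
  assumes "D \<in> ordered_partitions n" "k < length D" "c \<in> D ! k"
  shows "block_of D c = k"
  unfolding block_of_def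
  by (rule the_equality) (use assms in \<open>auto simp: ordered_partitions_def\<close>)

lemma block_of_in:
  assumes D: "D \<in> ordered_partitions n" and c: "c < n"
  shows "block_of D c < length D" "c \<in> D ! block_of D c"
proof -
  have "c \<in> \<Union> (set D)" using D c unfolding ordered_partitions_def by auto
  then obtain k where "k < length D" "c \<in> D ! k" by (auto simp: in_set_conv_nth)
  then show "block_of D c < length D" "c \<in> D ! block_of D c" using block_of_eq[OF D] by simp_all
qed

definition diff_label :: "nat \<Rightarrow> (nat \<Rightarrow> int) \<Rightarrow> nat \<Rightarrow> int" where
  "diff_label n t = (\<lambda>i\<in>{..<n}. sgn (t ((i + 1) mod n) - t i))"

definition sched_label :: "nat \<Rightarrow> nat set list \<Rightarrow> nat \<Rightarrow> int" where
  "sched_label n D = diff_label n (\<lambda>c. int (block_of D c))"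

lemma diff_label_realizable:
  assumes n: "0 < n"
  shows "diff_label n t \<in> realizable n"
proof -
  let ?b = "diff_label n t"
  have lab: "?b i = sgn (t ((i + 1) mod n) - t i)" if "i < n" for i
    using that by (simp add: diff_label_def)
  have "?b \<in> labelings n"
    unfolding diff_label_def labelings_def restrict_PiE_iff by (simp add: sgn_if)
  moreover have "\<exists>i<n. ?b i = v" if v: "v = 1 \<or> v = -1" and i0: "i0 < n" "?b i0 \<noteq> 0" for v i0
  proof (rule ccontr)
    assume "\<not> ?thesis"
    then have "\<forall>i<n. sgn (t ((i + 1) mod n) - t i) \<noteq> v" using lab by auto
    from cyclic_sgn_const[OF n v this] show False using i0 lab by simp
  qed
  ultimately show ?thesis unfolding realizable_def by blast
qed

lemma dep_take:
  assumes D: "D \<in> ordered_partitions n" and m: "m \<le> length D" and i: "i < n"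
  shows "dep n (take m D) i = (if block_of D i < m then label_dep n (sched_label n D) (int i) else {i})"
  using m i
proof (induction m arbitrary: i)
  case 0
  then show ?case by (simp add: dep_def)
next
  case (Suc m)
  let ?b = "sched_label n D"
  have m: "m < length D" using Suc.prems by simp
  have step: "dep n (take (Suc m) D) i = (\<Union>k\<in>nbhd n (D ! m) i. dep n (take m D) k)"
    using m by (simp add: take_Suc_conv_app_nth dep_def dep_step_def)
  show ?case
  proof (cases "i \<in> D ! m")
    case False
    then have "block_of D i \<noteq> m" using block_of_in[OF D Suc.prems(2)] by auto
    then show ?thesis using False step Suc.IH[OF _ Suc.prems(2)] m by (simp add: nbhd_def)
  next
    case True
    define l r where "l = (i + n - 1) mod n" and "r = (i + 1) mod n"
    have n: "0 < n" and lr: "l < n" "r < n" using Suc.prems(2) by (simp_all add: l_def r_def)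
    have bi: "block_of D i = m" using block_of_eq[OF D m True] .
    have "(l + 1) mod n = (i + n - 1 + 1) mod n" unfolding l_def by (rule mod_add_left_eq)
    also have "i + n - 1 + 1 = i + n" using n by simp
    finally have "(l + 1) mod n = i" using Suc.prems(2) by simp
    then have "?b l = 1 \<longleftrightarrow> block_of D l < m" "?b i = -1 \<longleftrightarrow> block_of D r < m"
      using lr Suc.prems(2) bi by (simp_all add: sched_label_def diff_label_def r_def sgn_if)
    moreover have "?b \<in> realizable n" unfolding sched_label_def using n by (rule diff_label_realizable)
    ultimately have "label_dep n ?b (int i) = {l, i, r} \<union> (if block_of D l < m then label_dep n ?b (int l) else {})
        \<union> (if block_of D r < m then label_dep n ?b (int r) else {})"
      using label_dep_rec_cells[of ?b n i] Suc.prems(2) unfolding l_def r_def by simp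
    moreover have "dep n (take (Suc m) D) i = dep n (take m D) l \<union> dep n (take m D) i \<union> dep n (take m D) r"
      using step True Suc.prems(2) by (auto simp: nbhd_def l_def r_def)
    ultimately show ?thesis
      using Suc.IH[OF _ lr(1)] Suc.IH[OF _ lr(2)] Suc.IH[OF _ Suc.prems(2)] m bi label_dep_self[OF lr(1)] label_dep_self[OF lr(2)]
      by auto
  qed
qed

lemma dep_eq_label_dep:
  assumes "D \<in> ordered_partitions n" "i < n"
  shows "dep n D i = label_dep n (sched_label n D) (int i)"
  using dep_take[OF assms(1) order.refl assms(2)] block_of_in[OF assms] by simp

text \<open>Every realizable labeling is the sign pattern of a potential: the weights \<open>q\<close> on edges
  labeled \<open>1\<close> and \<open>-p\<close> on edges labeled \<open>-1\<close>, where \<open>p\<close> and \<open>q\<close> count these edges, sum to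
  \<open>0\<close> around the ring.\<close>

lemma realizable_diff_label:
  assumes b: "b \<in> realizable n"
  shows "\<exists>t. diff_label n t = b"
proof -
  define p q where "p = card ({..<n} \<inter> {j. b j = 1})" and "q = card ({..<n} \<inter> {j. b j = -1})"
  define w where "w j = int q * of_bool (b j = 1) - int p * of_bool (b j = -1)" for j
  define t where "t i = (\<Sum>j<i. w j)" for i
  have card_pos: "0 < card ({..<n} \<inter> {j. b j = v})" if "v = 1 \<or> v = -1" "j < n" "b j = - v" for v j
  proof -
    have "\<exists>k<n. b k = v" using b that by (auto simp: realizable_def)
    then show ?thesis by (auto simp: card_gt_0_iff)
  qed
  have sgn_w: "sgn (w j) = b j" if j: "j < n" for j
  proof -
    have "b j \<in> {-1, 0, 1}" using b j by (auto simp: realizable_def labelings_def)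
    then show ?thesis
      using card_pos[of "-1" j] card_pos[of 1 j] j by (auto simp: w_def p_def q_def)
  qed
  have "t n = 0" by (simp add: t_def w_def p_def q_def sum_subtractf)
  have step: "t ((i + 1) mod n) - t i = w i" if i: "i < n" for i
  proof (cases "i + 1 < n")
    case False
    then have "n = Suc i" using i by simp
    then show ?thesis using \<open>t n = 0\<close> by (simp add: t_def)
  qed (simp add: t_def)
  have "diff_label n t i = b i" for i
    using b sgn_w step by (cases "i < n") (auto simp: diff_label_def realizable_def labelings_def)
  then show ?thesis by blast
qed

definition level_schedule :: "nat \<Rightarrow> (nat \<Rightarrow> int) \<Rightarrow> nat set list" where
  "level_schedule n t = map (\<lambda>v. {c. c < n \<and> t c = v}) (sorted_list_of_set (t ` {..<n}))"

lemma level_schedule_ordered_partition: "level_schedule n t \<in> ordered_partitions n"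
proof -
  let ?vs = "sorted_list_of_set (t ` {..<n})"
  have set_vs: "set ?vs = t ` {..<n}" and dist: "distinct ?vs" by simp_all
  have "\<forall>B\<in>set (level_schedule n t). B \<noteq> {}"
    using set_vs by (auto simp: level_schedule_def)
  moreover have "level_schedule n t ! i \<inter> level_schedule n t ! j = {}"
    if "i < length ?vs" "j < length ?vs" "i \<noteq> j" for i j
    using that nth_eq_iff_index_eq[OF dist] by (auto simp: level_schedule_def)
  moreover have "\<Union> (set (level_schedule n t)) = {..<n}"
    using set_vs by (auto simp: level_schedule_def)
  ultimately show ?thesis by (simp add: ordered_partitions_def level_schedule_def)
qed

lemma block_of_level_schedule:
  fixes t :: "nat \<Rightarrow> int"
  assumes c: "c < n"
  defines "vs \<equiv> sorted_list_of_set (t ` {..<n})"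
  shows "block_of (level_schedule n t) c < length vs" "vs ! block_of (level_schedule n t) c = t c"
proof -
  obtain k where k: "k < length vs" "vs ! k = t c"
    using c unfolding vs_def by (metis imageI in_set_conv_nth lessThan_iff finite_imageI finite_lessThan set_sorted_list_of_set)
  have "c \<in> level_schedule n t ! k" using k c by (simp add: level_schedule_def vs_def)
  then have "block_of (level_schedule n t) c = k"
    using block_of_eq[OF level_schedule_ordered_partition] k by (simp add: level_schedule_def vs_def)
  then show "block_of (level_schedule n t) c < length vs" "vs ! block_of (level_schedule n t) c = t c"
    using k by simp_all
qed

lemma sched_label_level_schedule: "sched_label n (level_schedule n t) = diff_label n t"
proof -
  let ?vs = "sorted_list_of_set (t ` {..<n})" and ?k = "block_of (level_schedule n t)"
  have "sgn (int (?k c') - int (?k c)) = sgn (t c' - t c)" if "c < n" "c' < n" for c c'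
    using sgn_diff_sorted_nth[of ?vs "?k c" "?k c'"] block_of_level_schedule that by simp
  then show ?thesis by (auto simp: sched_label_def diff_label_def)
qed

lemma sched_label_image: "0 < n \<Longrightarrow> sched_label n ` ordered_partitions n = realizable n"
proof (intro equalityI subsetI)
  fix b assume "b \<in> realizable n"
  then obtain t where "diff_label n t = b" using realizable_diff_label by blast
  then show "b \<in> sched_label n ` ordered_partitions n"
    using level_schedule_ordered_partition sched_label_level_schedule by (metis image_eqI)
qed (auto simp: sched_label_def intro: diff_label_realizable)

definition label_dynamics :: "nat \<Rightarrow> (nat \<Rightarrow> int) \<Rightarrow> ((nat \<Rightarrow> bool) \<times> (nat \<Rightarrow> bool)) set" where
  "label_dynamics n b = conj_dynamics n (\<lambda>i. label_dep n b (int i))"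

lemma all_dynamics_eq_label_dynamics:
  assumes n: "0 < n"
  shows "all_dynamics n = label_dynamics n ` realizable n"
proof -
  have "dynamics n D = label_dynamics n (sched_label n D)" if "D \<in> ordered_partitions n" for D
    unfolding dynamics_eq_conj_dynamics label_dynamics_def
    by (rule conj_dynamics_cong) (rule dep_eq_label_dep[OF that])
  then have "all_dynamics n = label_dynamics n ` sched_label n ` ordered_partitions n"
    unfolding all_dynamics_def image_image by (rule image_cong[OF refl])
  then show ?thesis using sched_label_image[OF n] by simp
qed

lemma label_dynamics_eq_iff:
  assumes n: "0 < n"
  shows "label_dynamics n a = label_dynamics n b \<longleftrightarrow> (\<forall>i. window n a i = window n b i)"
proof -
  have "label_dynamics n a = label_dynamics n b \<longleftrightarrow> (\<forall>i<n. window n a (int i) = window n b (int i))"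
    unfolding label_dynamics_def
    using conj_dynamics_eq_iff label_dep_subset[OF n] label_dep_eq_iff_window_eq[OF n] by simp
  also have "\<dots> \<longleftrightarrow> (\<forall>i. window n a i = window n b i)"
  proof (intro iffI allI)
    fix i assume "\<forall>i<n. window n a (int i) = window n b (int i)"
    then have "window n a (int (cell n i)) = window n b (int (cell n i))" using cell_less[OF n] by blast
    moreover have "int (cell n i) mod int n = i mod int n" using of_nat_cell[OF n] by simp
    ultimately show "window n a i = window n b i" using window_cong by metis
  qed simp
  finally show ?thesis .
qed

lemma card_realizable: "card (realizable n) + 2 ^ (n + 1) = 3 ^ n + 2"
proof -
  define A B where "A = PiE {..<n} (\<lambda>_. {0, 1 :: int})" and "B = PiE {..<n} (\<lambda>_. {0, -1 :: int})"
  have fin: "finite A" "finite B" "finite (labelings n)"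
    unfolding A_def B_def labelings_def by (simp_all add: finite_PiE)
  have "A \<inter> B = PiE {..<n} (\<lambda>_. {0})" unfolding A_def B_def PiE_Int by (rule PiE_cong) auto
  then have cAB: "card (A \<inter> B) = 1" by (simp add: card_PiE)
  have "card A = 2 ^ n" "card B = 2 ^ n" "card (labelings n) = 3 ^ n"
    unfolding A_def B_def labelings_def by (simp_all add: card_PiE numeral_2_eq_2 numeral_3_eq_3)
  then have cU: "card (A \<union> B) + 1 = 2 ^ (n + 1)" using card_Un_Int[OF fin(1,2)] cAB by simp
  have memA: "b \<in> A \<longleftrightarrow> b \<in> labelings n \<and> (\<forall>i<n. b i \<noteq> -1)" for b
    unfolding A_def labelings_def PiE_iff by (auto simp: Ball_def)
  have memB: "b \<in> B \<longleftrightarrow> b \<in> labelings n \<and> (\<forall>i<n. b i \<noteq> 1)" for b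
    unfolding B_def labelings_def PiE_iff by (auto simp: Ball_def)
  have "realizable n \<union> (A \<union> B) = labelings n"
    unfolding realizable_def using memA memB by blast
  moreover have "realizable n \<inter> (A \<union> B) = A \<inter> B"
    unfolding realizable_def using memA memB labelings_values by fastforce
  ultimately have "card (realizable n) + card (A \<union> B) = 3 ^ n + 1"
    using card_Un_Int[of "realizable n" "A \<union> B"] fin cAB \<open>card (labelings n) = 3 ^ n\<close>
      finite_realizable by simp
  then show ?thesis using cU by simp
qed

section \<open>Mirror symmetry\<close>

text \<open>Reflecting the ring (cell \<open>c\<close> to \<open>-c\<close>) maps edge \<open>j\<close> to edge \<open>-1 - j\<close> and reverses
  its orientation; it exchanges left and right runs.\<close>

definition mirror :: "nat \<Rightarrow> (nat \<Rightarrow> int) \<Rightarrow> nat \<Rightarrow> int" where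
  "mirror n b = (\<lambda>i\<in>{..<n}. - b (n - 1 - i))"

lemma cell_mirror:
  assumes n: "0 < n"
  shows "cell n (-1 - j) = n - 1 - cell n j"
proof -
  have e: "int n - 1 - j = (-1 - j) + int n" by simp
  have "(-1 - j) mod int n = (int n - 1 - j) mod int n" unfolding e by (rule mod_add_self2[symmetric])
  also have "\<dots> = (int n - 1 - j mod int n) mod int n" by (rule mod_diff_right_eq[symmetric])
  also have "\<dots> = int n - 1 - j mod int n"
  proof (rule mod_pos_pos_trivial)
    have "0 \<le> j mod int n" "j mod int n < int n" using n by simp_all
    then show "0 \<le> int n - 1 - j mod int n" "int n - 1 - j mod int n < int n" by linarith+
  qed
  finally show ?thesis using n by (simp add: cell_def nat_diff_distrib)
qed

lemma lbl_mirror: "0 < n \<Longrightarrow> lbl n (mirror n b) j = - lbl n b (-1 - j)"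
  using cell_less[of n j] by (simp add: lbl_def mirror_def cell_mirror)

lemma mirror_mirror: "b \<in> extensional {..<n} \<Longrightarrow> mirror n (mirror n b) = b"
  by (auto simp: mirror_def fun_eq_iff extensional_def)

lemma mirror_realizable:
  assumes b: "b \<in> realizable n"
  shows "mirror n b \<in> realizable n"
proof -
  have bL: "b \<in> labelings n" using b by (simp add: realizable_def)
  have "- b (n - 1 - i) \<in> {-1, 0, 1}" if "i < n" for i
    using labelings_values[OF bL, of "n - 1 - i"] that by auto
  then have mL: "mirror n b \<in> labelings n"
    unfolding mirror_def labelings_def restrict_PiE_iff by blast
  have ex: "\<exists>i<n. mirror n b i = - v" if "i < n" "b i = v" for i v
    using that by (intro exI[of _ "n - 1 - i"]) (auto simp: mirror_def)
  from b consider "\<forall>i<n. b i = 0" | i k where "i < n" "b i = 1" "k < n" "b k = -1"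
    unfolding realizable_def by blast
  then show ?thesis
  proof cases
    case 1
    then have "\<forall>i<n. mirror n b i = 0" by (simp add: mirror_def)
    then show ?thesis using mL by (simp add: realizable_def)
  next
    case 2
    then show ?thesis using mL ex[of i 1] ex[of k "-1"] by (simp add: realizable_def)
  qed
qed

lemma left_run_mirror: "0 < n \<Longrightarrow> left_run n (mirror n b) i = right_run n b (- i)"
  unfolding left_run_def right_run_def by (auto simp: lbl_mirror fun_eq_iff algebra_simps)

lemma right_run_mirror:
  assumes n: "0 < n"
  shows "right_run n (mirror n b) i = left_run n b (- i)"
proof -
  have e: "- 1 - (i + int m) = - i - 1 - int m" for m by simp
  show ?thesis unfolding left_run_def right_run_def lbl_mirror[OF n] e by (simp add: minus_equation_iff)
qed

lemma window_mirror: "0 < n \<Longrightarrow> window n (mirror n b) i = map_option prod.swap (window n b (- i))"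
  by (simp add: window_def covers_def left_run_mirror right_run_mirror add.commute)

lemma same_windows_mirror:
  assumes "0 < n" "\<And>i. window n a i = window n b i"
  shows "window n (mirror n a) i = window n (mirror n b) i"
  using assms by (simp add: window_mirror)

section \<open>Redundant labelings\<close>

text \<open>A label \<open>0\<close> at edge \<open>d\<close> preceded by \<open>n - 3\<close> labels \<open>1\<close> can be replaced by \<open>-1\<close>
  without changing any window, and symmetrically on the right. These replacements account for all
  coincidences between the windows of distinct realizable labelings.\<close>

definition left_redundant_at :: "nat \<Rightarrow> (nat \<Rightarrow> int) \<Rightarrow> nat \<Rightarrow> bool" where
  "left_redundant_at n b d \<longleftrightarrow> b d = 0 \<and> long_left_run n b (int d)"

definition right_redundant_at :: "nat \<Rightarrow> (nat \<Rightarrow> int) \<Rightarrow> nat \<Rightarrow> bool" where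
  "right_redundant_at n b d \<longleftrightarrow> b d = 0 \<and> long_right_run n b (int d + 1)"

definition redundant :: "nat \<Rightarrow> (nat \<Rightarrow> int) set" where
  "redundant n = {b \<in> realizable n. \<exists>d<n. left_redundant_at n b d \<or> right_redundant_at n b d}"

lemma lbl_beyond_long_left_run:
  assumes n: "0 < n" and run: "long_left_run n b i" and r: "3 \<le> (j - i) mod int n"
  shows "lbl n b j = 1"
proof -
  define r where "r = (j - i) mod int n"
  define k where "k = nat (int n - 1 - r)"
  have "r < int n" "3 \<le> r" using n r by (simp_all add: r_def)
  then have "k < n - 3" "i - 1 - int k = (i + r) + (-1) * int n" by (simp_all add: k_def)
  then have "lbl n b (i + r) = 1"
    using run[unfolded long_left_run_def] lbl_cong[OF mod_mult_self1] by metis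
  then show ?thesis using lbl_shift_right[of n b i j, folded r_def] by simp
qed

lemma long_left_run_offset:
  assumes "0 < n" "long_left_run n b i" "lbl n b j \<noteq> 1"
  shows "(j - i) mod int n < 3"
  using lbl_beyond_long_left_run[OF assms(1,2)] assms(3) by (meson not_less)

lemma long_left_run_left_redundant_at:
  assumes n: "7 \<le> n" and d: "d < n" "d' < n" "d \<noteq> d'"
    and run: "long_left_run n b (int d)" and red: "left_redundant_at n b d'"
  shows "b d = 1"
proof -
  have n0: "0 < n" using n by simp
  have "b d' = 0" using red by (simp add: left_redundant_at_def)
  define r where "r = (int d' - int d) mod int n"
  have "r < 3" using long_left_run_offset[OF n0 run, of "int d'"] d \<open>b d' = 0\<close> by (simp add: r_def)
  moreover have "r \<noteq> 0" using mod_diff_eq_0_nat[OF d(2,1)] d(3) by (auto simp: r_def)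
  moreover have "0 \<le> r" using n0 by (simp add: r_def)
  ultimately have r: "r = 1 \<or> r = 2" by linarith
  have "nat (r - 1) < n - 3" using r n by auto
  then have "lbl n b (int d' - 1 - int (nat (r - 1))) = 1"
    using red unfolding left_redundant_at_def long_left_run_def by blast
  moreover have "int d' - 1 - int (nat (r - 1)) = int d' - r" using r by auto
  moreover have "lbl n b (int d' - r) = b d"
    using lbl_shift_left[of n b "int d'" "int d"] d by (simp add: r_def)
  ultimately show ?thesis by simp
qed

lemma long_left_run_not_right_redundant_at:
  assumes n: "7 \<le> n" and d: "d < n" "d' < n"
    and run: "long_left_run n b (int d)" and red: "right_redundant_at n b d'"
  shows False
proof -
  have n0: "0 < n" using n by simp
  have "b d' = 0" using red by (simp add: right_redundant_at_def)
  define r where "r = (int d' - int d) mod int n"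
  have "r < 3" using long_left_run_offset[OF n0 run, of "int d'"] d \<open>b d' = 0\<close> by (simp add: r_def)
  moreover have "0 \<le> r" using n0 by (simp add: r_def)
  ultimately have "nat (2 - r) < n - 3" using n by auto
  then have "lbl n b (int d' + 1 + int (nat (2 - r))) = -1"
    using red unfolding right_redundant_at_def long_right_run_def by blast
  moreover have "(int d' + 1 + int (nat (2 - r))) mod int n = (int d + 3) mod int n"
  proof -
    have "(int d' - r) mod int n = int d mod int n"
      unfolding r_def by (simp add: mod_diff_right_eq)
    then have "(int d' - r + 3) mod int n = (int d + 3) mod int n" by (rule mod_add_cong) simp
    then show ?thesis using \<open>r < 3\<close> \<open>0 \<le> r\<close> by (simp add: algebra_simps)
  qed
  then have "lbl n b (int d' + 1 + int (nat (2 - r))) = lbl n b (int d + 3)" by (rule lbl_cong)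
  moreover have "lbl n b (int d + 3) = 1" using lbl_beyond_long_left_run[OF n0 run] n by simp
  ultimately show False by simp
qed

lemma left_redundant_at_unique:
  assumes n: "7 \<le> n" and d: "d < n" "d' < n"
    and red: "left_redundant_at n b d" "left_redundant_at n b d'"
  shows "d = d'"
proof (rule ccontr)
  assume "d \<noteq> d'"
  moreover have "long_left_run n b (int d)" using red(1) by (simp add: left_redundant_at_def)
  ultimately have "b d = 1" using long_left_run_left_redundant_at[OF n d] red(2) by blast
  then show False using red(1) by (simp add: left_redundant_at_def)
qed

lemma left_redundant_mirror:
  assumes n: "0 < n" and d: "d < n"
  shows "left_redundant_at n (mirror n b) d \<longleftrightarrow> right_redundant_at n b (n - 1 - d)"
proof -
  have "lbl n (mirror n b) (int d - 1 - int k) = - lbl n b (int (n - 1 - d) + 1 + int k)" for k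
  proof -
    have e: "int (n - 1 - d) + 1 + int k = (int k - int d) + 1 * int n" using d by simp
    have "lbl n b (int (n - 1 - d) + 1 + int k) = lbl n b (int k - int d)"
      unfolding e by (rule lbl_cong[OF mod_mult_self1])
    then show ?thesis by (simp add: lbl_mirror[OF n])
  qed
  moreover have "mirror n b d = - b (n - 1 - d)" using d by (simp add: mirror_def)
  ultimately show ?thesis
    unfolding left_redundant_at_def right_redundant_at_def long_left_run_def long_right_run_def by (auto simp: minus_equation_iff)
qed

lemma right_redundant_mirror:
  assumes n: "0 < n" and d: "d < n" and b: "b \<in> extensional {..<n}"
  shows "right_redundant_at n (mirror n b) d \<longleftrightarrow> left_redundant_at n b (n - 1 - d)"
proof -
  have d': "n - 1 - d < n" "n - 1 - (n - 1 - d) = d" using d by auto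
  show ?thesis using left_redundant_mirror[OF n d'(1), of "mirror n b"] mirror_mirror[OF b] d'(2) by simp
qed

lemma mirror_redundant:
  assumes n: "0 < n" and b: "b \<in> redundant n"
  shows "mirror n b \<in> redundant n"
proof -
  have bR: "b \<in> realizable n" using b by (simp add: redundant_def)
  then have ext: "b \<in> extensional {..<n}" by (simp add: realizable_def labelings_def PiE_iff)
  obtain d where d: "d < n" "left_redundant_at n b d \<or> right_redundant_at n b d"
    using b by (auto simp: redundant_def)
  have d': "n - 1 - d < n" "n - 1 - (n - 1 - d) = d" using d(1) by simp_all
  have "right_redundant_at n (mirror n b) (n - 1 - d) \<or> left_redundant_at n (mirror n b) (n - 1 - d)"
    using d(2) right_redundant_mirror[OF n d'(1) ext] left_redundant_mirror[OF n d'(1)] d'(2) by simp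
  then show ?thesis
    using mirror_realizable[OF bR] \<open>n - 1 - d < n\<close> by (auto simp: redundant_def)
qed

context
  fixes n :: nat and a b :: "nat \<Rightarrow> int"
  assumes n: "7 \<le> n" and a: "a \<in> realizable n" and b: "b \<in> realizable n"
    and same: "\<And>i. window n a i = window n b i"
begin

lemma same_windows_covers:
  "left_run n a i \<noteq> left_run n b i \<or> right_run n a i \<noteq> right_run n b i \<Longrightarrow> covers n a i \<and> covers n b i"
  using window_eq_runs_eq[OF same] window_eq_covers_eq[OF same] by blast

lemma same_windows_left_redundant:
  assumes d: "d < n" and ad: "a d = -1" and bd: "b d = 0"
  shows "left_redundant_at n b d"
proof -
  have "right_run n a (int d) \<noteq> 0" using right_run_Suc[OF a] ad d n by simp
  moreover have "right_run n b (int d) = 0" using bd d by (simp add: right_run_0)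
  ultimately have "covers n b (int d)" using same_windows_covers by auto
  then show ?thesis
    using covers_long_left_run \<open>right_run n b (int d) = 0\<close> bd by (simp add: left_redundant_at_def)
qed

lemma same_windows_opposite_runs:
  assumes d: "d < n" and ad: "a d = 1" and bd: "b d = -1"
  shows "long_left_run n a (int d)" "long_right_run n b (int d + 1)"
proof -
  have n0: "0 < n" using n by simp
  have ai: "lbl n a (int d) = 1" and bi: "lbl n b (int d) = -1" using ad bd d by simp_all
  have "right_run n a (int d) = 0" using ai by (simp add: right_run_0)
  moreover have "right_run n b (int d) \<noteq> 0" using right_run_Suc[OF b n0 bi] by simp
  ultimately have "covers n a (int d)" using same_windows_covers by auto
  then show "long_left_run n a (int d)"
    using covers_long_left_run \<open>right_run n a (int d) = 0\<close> by blast
  have "left_run n b (int d + 1) = 0" using bi by (simp add: left_run_0)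
  moreover have "left_run n a (int d + 1) \<noteq> 0" using left_run_Suc[OF a n0, of "int d + 1"] ai by simp
  ultimately have "covers n b (int d + 1)" using same_windows_covers by auto
  then show "long_right_run n b (int d + 1)"
    using covers_long_right_run \<open>left_run n b (int d + 1) = 0\<close> by blast
qed

text \<open>At cell \<open>d + 2\<close> the right run of \<open>a\<close> is stopped by the label \<open>1\<close> at edge \<open>d + 3\<close>,
  while that of \<open>b\<close> is long; so \<open>b\<close> covers the ring from there.\<close>

lemma same_windows_opposite_minus_two:
  assumes d: "d < n" and ad: "a d = 1" and bd: "b d = -1"
  shows "lbl n b (int d - 2) = -1"
proof -
  define i where "i = int d"
  have n0: "0 < n" using n by simp
  have a_run: "long_left_run n a i" and b_run: "\<forall>k<n - 3. lbl n b (i + 1 + int k) = -1"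
    using same_windows_opposite_runs[OF d ad bd] by (simp_all add: i_def long_right_run_def)
  have "lbl n a (i + 2 + 1) = 1" using lbl_beyond_long_left_run[OF n0 a_run] n by simp
  then have "right_run n a (i + 2) \<le> 1" by (intro right_run_le) simp
  moreover have "lbl n b (i + 2 + int k) = -1" if "k < 3" for k
    using b_run[rule_format, of "Suc k"] that n by (simp add: algebra_simps)
  then have "3 \<le> right_run n b (i + 2)" by (intro right_run_ge[OF b n0])
  ultimately have cov: "covers n b (i + 2)" using same_windows_covers by auto
  have "left_run n b (i + 2) = 0"
  proof (rule left_run_0)
    have e: "i + 2 - 1 = i + 1 + int 0" by simp
    show "lbl n b (i + 2 - 1) \<noteq> 1" unfolding e using b_run[rule_format, of 0] n by simp
  qed
  then have "long_right_run n b (i + 2)" by (rule covers_long_right_run[OF cov])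
  then have "lbl n b (i + 2 + int (n - 4)) = -1"
    using n unfolding long_right_run_def by (auto dest: spec[of _ "n - 4"])
  moreover have e: "i + 2 + int (n - 4) = (i - 2) + int n" using n by simp
  ultimately have "lbl n b (i - 2) = -1" unfolding e using lbl_cong[OF mod_add_self2] by metis
  then show ?thesis by (simp add: i_def)
qed

text \<open>Then at cell \<open>d - 1\<close> the right run of \<open>b\<close> goes all around the ring.\<close>

lemma same_windows_not_opposite:
  assumes d: "d < n" and ad: "a d = 1" and bd: "b d = -1"
  shows False
proof -
  define i where "i = int d"
  have n0: "0 < n" using n by simp
  have bi: "lbl n b i = -1" using bd d by (simp add: i_def)
  have a_run: "\<forall>k<n - 3. lbl n a (i - 1 - int k) = 1" and b_run: "\<forall>k<n - 3. lbl n b (i + 1 + int k) = -1"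
    using same_windows_opposite_runs[OF d ad bd] by (simp_all add: i_def long_left_run_def long_right_run_def)
  have b_m2: "lbl n b (i - 2) = -1" using same_windows_opposite_minus_two[OF d ad bd] by (simp add: i_def)
  have "left_run n b (i - 1) = 0" using b_m2 by (intro left_run_0) simp
  moreover have "left_run n a (i - 1) \<noteq> 0"
    using left_run_Suc[OF a n0, of "i - 1"] a_run[rule_format, of 1] n by simp
  ultimately have "covers n b (i - 1)" using same_windows_covers by auto
  then have "long_right_run n b (i - 1)" using covers_long_right_run \<open>left_run n b (i - 1) = 0\<close> by blast
  then have b_m1: "lbl n b (i - 1) = -1"
    using n unfolding long_right_run_def by (auto dest: spec[of _ 0])
  have "lbl n b (i - 2 + int k) = -1" if k: "k < n" for k
  proof -
    consider "k = 0" | "k = 1" | "k = 2" | "3 \<le> k" by linarith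
    then show ?thesis
    proof cases
      case 1
      then show ?thesis using b_m2 by simp
    next
      case 2
      then have e: "i - 2 + int k = i - 1" by simp
      show ?thesis unfolding e by (rule b_m1)
    next
      case 3
      then have e: "i - 2 + int k = i" by simp
      show ?thesis unfolding e by (rule bi)
    next
      case 4
      then have e: "i - 2 + int k = i + 1 + int (k - 3)" by simp
      show ?thesis unfolding e by (rule b_run[rule_format]) (use k 4 in simp)
    qed
  qed
  then have "n \<le> right_run n b (i - 2)" by (intro right_run_ge[OF b n0])
  then show False using right_run_less[OF b n0, of "i - 2"] by simp
qed

end

lemma same_windows_right_redundant:
  assumes n: "7 \<le> n" and a: "a \<in> realizable n" and b: "b \<in> realizable n"
    and same: "\<And>i. window n a i = window n b i"
    and d: "d < n" and ad: "a d = 1" and bd: "b d = 0"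
  shows "right_redundant_at n b d"
proof -
  have n0: "0 < n" and d': "n - 1 - d < n" "n - 1 - (n - 1 - d) = d" using n d by auto
  have "left_redundant_at n (mirror n b) (n - 1 - d)"
  proof (rule same_windows_left_redundant[OF n mirror_realizable[OF a] mirror_realizable[OF b] _ d'(1)])
    show "window n (mirror n a) i = window n (mirror n b) i" for i
      using same_windows_mirror[OF n0 same] .
  qed (use d d' in \<open>simp_all add: mirror_def ad bd\<close>)
  then show ?thesis using left_redundant_mirror[OF n0 d'(1)] d'(2) by simp
qed

lemma same_windows_redundant:
  assumes n: "7 \<le> n" and a: "a \<in> realizable n" and b: "b \<in> realizable n"
    and same: "\<And>i. window n a i = window n b i" and d: "d < n" and ne: "a d \<noteq> b d"
  shows "a \<in> redundant n \<or> b \<in> redundant n"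
proof -
  note same' = same[symmetric]
  have "a d \<in> {-1, 0, 1}" "b d \<in> {-1, 0, 1}"
    using a b d labelings_values by (auto simp: realizable_def)
  then consider "a d = -1" "b d = 0" | "a d = 0" "b d = -1" | "a d = 1" "b d = 0" | "a d = 0" "b d = 1"
    | "a d = 1" "b d = -1" | "a d = -1" "b d = 1"
    using ne by auto
  then show ?thesis
  proof cases
    case 1
    then show ?thesis using same_windows_left_redundant[OF n a b same d] b d by (auto simp: redundant_def)
  next
    case 2
    then show ?thesis using same_windows_left_redundant[OF n b a same' d] a d by (auto simp: redundant_def)
  next
    case 3
    then show ?thesis using same_windows_right_redundant[OF n a b same d] b d by (auto simp: redundant_def)
  next
    case 4
    then show ?thesis using same_windows_right_redundant[OF n b a same' d] a d by (auto simp: redundant_def)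
  next
    case 5
    then show ?thesis using same_windows_not_opposite[OF n a b same d] by simp
  next
    case 6
    then show ?thesis using same_windows_not_opposite[OF n b a same' d] by simp
  qed
qed

context
  fixes n :: nat and b :: "nat \<Rightarrow> int" and d :: nat
  assumes n: "7 \<le> n" and b: "b \<in> realizable n" and d: "d < n" and red: "left_redundant_at n b d"
begin

lemma left_redundant_run: "k < n - 3 \<Longrightarrow> lbl n b (int d - 1 - int k) = 1"
  using red by (simp add: left_redundant_at_def long_left_run_def)

lemma lbl_left_redundant_at: "j mod int n = int d \<Longrightarrow> lbl n b j = 0"
  using lbl_cong[of j n "int d" b] red d by (simp add: left_redundant_at_def)

lemma left_run_flip: "left_run n (b(d := -1)) i = left_run n b i"
proof -
  have "(lbl n (b(d := -1)) j = 1) = (lbl n b j = 1)" for j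
    using lbl_fun_upd[OF d] lbl_left_redundant_at by auto
  then show ?thesis unfolding left_run_def by simp
qed

lemma right_run_flip:
  assumes i: "i mod int n \<noteq> int d"
  shows "right_run n (b(d := -1)) i = right_run n b i"
  unfolding right_run_def[of n "b(d := -1)"]
proof (rule run_length_eqI)
  let ?q = "right_run n b i"
  fix k assume "k < ?q"
  then have "lbl n b (i + int k) = -1" by (rule right_run_prefix)
  then show "lbl n (b(d := -1)) (i + int k) = -1"
    using lbl_fun_upd[OF d] lbl_left_redundant_at by auto
next
  let ?q = "right_run n b i"
  show "lbl n (b(d := -1)) (i + int ?q) \<noteq> -1"
  proof (cases "(i + int ?q) mod int n = int d")
    case True
    have "?q \<noteq> 0"
    proof
      assume "?q = 0"
      then show False using True i by simp
    qed
    then have "lbl n b (i + int (?q - 1)) = -1" by (intro right_run_prefix) simp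
    moreover have "lbl n b (i + int (?q - 1)) = lbl n b (int d - 1 - int 0)"
    proof (rule lbl_cong)
      have e: "i + int (?q - 1) = (i + int ?q) - 1" using \<open>?q \<noteq> 0\<close> by simp
      have "(i + int (?q - 1)) mod int n = ((i + int ?q) mod int n - 1) mod int n"
        unfolding e by (rule mod_diff_left_eq[symmetric])
      then show "(i + int (?q - 1)) mod int n = (int d - 1 - int 0) mod int n" using True by simp
    qed
    moreover have "lbl n b (int d - 1 - int 0) = 1" using n by (intro left_redundant_run) simp
    ultimately show ?thesis by simp
  next
    case False
    then show ?thesis using lbl_fun_upd[OF d] right_run_stop[OF b] n by simp
  qed
qed

lemma left_run_left_redundant_at:
  assumes "i mod int n = int d"
  shows "n - 3 \<le> left_run n b i"
proof (rule left_run_ge[OF b])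
  fix k assume k: "k < n - 3"
  have "i mod int n = int d mod int n" using assms d by simp
  then have "lbl n b (i - 1 - int k) = lbl n b (int d - 1 - int k)"
    by (intro lbl_cong mod_diff_cong refl)
  then show "lbl n b (i - 1 - int k) = 1" using left_redundant_run[OF k] by simp
qed (use n in simp)

lemma window_flip: "window n (b(d := -1)) i = window n b i"
proof (cases "i mod int n = int d")
  case True
  then have "covers n b i" "covers n (b(d := -1)) i"
    using left_run_left_redundant_at[OF True] left_run_flip[of i] by (simp_all add: covers_def)
  then show ?thesis by (simp add: window_def)
qed (simp add: window_def covers_def left_run_flip right_run_flip)

lemma flip_realizable: "b(d := -1) \<in> realizable n"
proof -
  have "b(d := -1) \<in> labelings n"
    using b d PiE_fun_upd[of "-1" "\<lambda>_. {-1, 0, 1}" d b "{..<n}"]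
    by (simp add: realizable_def labelings_def insert_absorb)
  moreover have "lbl n (b(d := -1)) (int d - 1 - int 0) = 1"
    using lbl_fun_upd[OF d] mod_diff_ne[of 1 n "int d"] left_redundant_run[of 0] n d by simp
  then have "\<exists>i<n. (b(d := -1)) i = 1" by (rule lbl_witness[rotated]) (use n in simp)
  moreover have "\<exists>i<n. (b(d := -1)) i = -1" using d by auto
  ultimately show ?thesis unfolding realizable_def by blast
qed

lemma flip_not_redundant: "b(d := -1) \<notin> redundant n"
proof
  let ?c = "b(d := -1)"
  have c_run: "long_left_run n ?c (int d)"
    unfolding long_left_run_def
  proof (intro allI impI)
    fix k assume k: "k < n - 3"
    have "(int d - int (Suc k)) mod int n \<noteq> int d mod int n" using k by (intro mod_diff_ne) auto
    then show "lbl n ?c (int d - 1 - int k) = 1"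
      using lbl_fun_upd[OF d] left_redundant_run[OF k] d by (simp add: algebra_simps)
  qed
  assume "?c \<in> redundant n"
  then obtain d' where d': "d' < n" "left_redundant_at n ?c d' \<or> right_redundant_at n ?c d'"
    by (auto simp: redundant_def)
  then show False
  proof (elim disjE)
    assume red': "left_redundant_at n ?c d'"
    then have "d \<noteq> d'" by (auto simp: left_redundant_at_def)
    then have "?c d = 1" using long_left_run_left_redundant_at[OF n d d'(1) _ c_run red'] by blast
    then show False by simp
  next
    assume "right_redundant_at n ?c d'"
    then show False using long_left_run_not_right_redundant_at[OF n d d'(1) c_run] by blast
  qed
qed

end

definition left_redundant_label :: "nat \<Rightarrow> nat \<Rightarrow> int \<Rightarrow> int \<Rightarrow> nat \<Rightarrow> int" where
  "left_redundant_label n d x y = (\<lambda>i\<in>{..<n}. let r = (int i - int d) mod int n in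
     if r = 0 then 0 else if r = 1 then x else if r = 2 then y else 1)"

lemma lbl_left_redundant_label:
  assumes n: "0 < n"
  shows "lbl n (left_redundant_label n d x y) j = (let r = (j - int d) mod int n in
     if r = 0 then 0 else if r = 1 then x else if r = 2 then y else 1)"
proof -
  have "(int (cell n j) - int d) mod int n = (j - int d) mod int n"
    using of_nat_cell[OF n] by (simp add: mod_diff_left_eq)
  then show ?thesis using cell_less[OF n] by (simp add: lbl_def left_redundant_label_def)
qed

context
  fixes n :: nat and d :: nat
  assumes n: "7 \<le> n" and d: "d < n"
begin

lemma left_redundant_label_offsets:
  "lbl n (left_redundant_label n d x y) (int d + 1) = x"
  "lbl n (left_redundant_label n d x y) (int d + 2) = y"
  "lbl n (left_redundant_label n d x y) (int d + 3) = 1"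
  using n by (simp_all add: lbl_left_redundant_label)

lemma left_redundant_eq_label:
  assumes b: "b \<in> realizable n" and red: "left_redundant_at n b d"
  shows "b = left_redundant_label n d (lbl n b (int d + 1)) (lbl n b (int d + 2))"
proof
  fix i
  have n0: "0 < n" using n by simp
  have run: "long_left_run n b (int d)" and bd: "b d = 0"
    using red by (simp_all add: left_redundant_at_def)
  show "b i = left_redundant_label n d (lbl n b (int d + 1)) (lbl n b (int d + 2)) i"
  proof (cases "i < n")
    case True
    define r where "r = (int i - int d) mod int n"
    have bi: "b i = lbl n b (int d + r)"
      using lbl_shift_right[of n b "int d" "int i"] True by (simp add: r_def)
    have "b i = (if r = 0 then 0 else if r = 1 then lbl n b (int d + 1)
        else if r = 2 then lbl n b (int d + 2) else 1)"
    proof -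
      have "r = 0 \<Longrightarrow> i = d" using mod_diff_eq_0_nat[OF True d] by (simp add: r_def)
      moreover have "3 \<le> r \<Longrightarrow> b i = 1"
        using lbl_beyond_long_left_run[OF n0 run, of "int i"] True by (simp add: r_def)
      moreover have "0 \<le> r" using n0 by (simp add: r_def)
      ultimately show ?thesis using bi bd by (auto simp: not_le)
    qed
    then show ?thesis using True by (simp add: left_redundant_label_def r_def)
  next
    case False
    have "b \<in> extensional {..<n}" using b by (simp add: realizable_def labelings_def PiE_iff)
    then show ?thesis using extensional_arb[of b "{..<n}" i] False by (simp add: left_redundant_label_def)
  qed
qed

lemma left_redundant_label_args:
  assumes b: "b \<in> realizable n" and red: "left_redundant_at n b d"
  shows "(lbl n b (int d + 1), lbl n b (int d + 2)) \<in> {(-1, -1), (-1, 0), (-1, 1), (0, -1), (1, -1)}"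
proof -
  have n0: "0 < n" using n by simp
  have bL: "b \<in> labelings n" using b by (simp add: realizable_def)
  have run: "long_left_run n b (int d)" and bd: "b d = 0"
    using red by (simp_all add: left_redundant_at_def)
  have "lbl n b (int d - 1 - int 0) = 1" using run[unfolded long_left_run_def, rule_format, of 0] n by simp
  then have "\<exists>i<n. b i = 1" by (rule lbl_witness[OF n0])
  then obtain j where j: "j < n" "b j = -1" using b by (force simp: realizable_def)
  define r where "r = (int j - int d) mod int n"
  have "r < 3" using long_left_run_offset[OF n0 run, of "int j"] j by (simp add: r_def)
  moreover have "r \<noteq> 0" using mod_diff_eq_0_nat[OF j(1) d] j bd by (auto simp: r_def)
  moreover have "0 \<le> r" using n0 by (simp add: r_def)
  ultimately have "r = 1 \<or> r = 2" by linarith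
  moreover have "lbl n b (int d + r) = -1"
    using lbl_shift_right[of n b "int d" "int j"] j by (simp add: r_def)
  ultimately have "lbl n b (int d + 1) = -1 \<or> lbl n b (int d + 2) = -1" by auto
  then show ?thesis using lbl_in_labels[OF bL n0, of "int d + 1"] lbl_in_labels[OF bL n0, of "int d + 2"]
    by auto
qed

lemma left_redundant_label_left_redundant:
  assumes xy: "(x, y) \<in> {(-1, -1), (-1, 0), (-1, 1), (0, -1), (1, -1)}"
  shows "left_redundant_label n d x y \<in> realizable n" "left_redundant_at n (left_redundant_label n d x y) d"
proof -
  let ?b = "left_redundant_label n d x y"
  have n0: "0 < n" using n by simp
  have "?b \<in> labelings n"
    using xy by (auto simp: left_redundant_label_def labelings_def Let_def)
  moreover have "\<exists>i<n. ?b i = 1" "\<exists>i<n. ?b i = -1"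
    using xy left_redundant_label_offsets[of x y] lbl_witness[OF n0] by blast+
  ultimately show "?b \<in> realizable n" by (simp add: realizable_def)
  have "lbl n ?b (int d - 1 - int k) = 1" if k: "k < n - 3" for k
  proof -
    have "int d - 1 - int k - int d = (int n - 1 - int k) + (-1) * int n" by simp
    then have "(int d - 1 - int k - int d) mod int n = int n - 1 - int k"
      using k by (simp only: mod_mult_self1) (simp add: mod_pos_pos_trivial)
    then show ?thesis using k n by (auto simp: lbl_left_redundant_label Let_def)
  qed
  moreover have "?b d = 0" using d by (simp add: left_redundant_label_def)
  ultimately show "left_redundant_at n ?b d" by (simp add: left_redundant_at_def long_left_run_def)
qed

lemma card_left_redundant_at: "card {b \<in> realizable n. left_redundant_at n b d} = 5"
proof -
  define S :: "(int \<times> int) set" where "S = {(-1, -1), (-1, 0), (-1, 1), (0, -1), (1, -1)}"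
  have "{b \<in> realizable n. left_redundant_at n b d} = (\<lambda>(x, y). left_redundant_label n d x y) ` S"
  proof (intro equalityI subsetI)
    fix b assume "b \<in> {b \<in> realizable n. left_redundant_at n b d}"
    then show "b \<in> (\<lambda>(x, y). left_redundant_label n d x y) ` S"
      using left_redundant_eq_label left_redundant_label_args unfolding S_def by fastforce
  qed (use left_redundant_label_left_redundant in \<open>auto simp: S_def\<close>)
  moreover have "inj_on (\<lambda>(x, y). left_redundant_label n d x y) S"
  proof (rule inj_onI, clarify)
    fix x y x' y' :: int
    assume "left_redundant_label n d x y = left_redundant_label n d x' y'"
    then show "x = x' \<and> y = y'" using left_redundant_label_offsets(1,2) by metis
  qed
  moreover have "card S = 5" by (simp add: S_def)
  ultimately show ?thesis by (simp add: card_image)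
qed

end

section \<open>Counting\<close>

lemma card_left_redundant:
  assumes n: "7 \<le> n"
  shows "card {b \<in> realizable n. \<exists>d<n. left_redundant_at n b d} = 5 * n"
proof -
  have "{b \<in> realizable n. \<exists>d<n. left_redundant_at n b d}
      = (\<Union>d<n. {b \<in> realizable n. left_redundant_at n b d})" by blast
  also have "card \<dots> = (\<Sum>d<n. card {b \<in> realizable n. left_redundant_at n b d})"
    using left_redundant_at_unique[OF n] finite_realizable by (intro card_UN_disjoint) auto
  also have "\<dots> = 5 * n" using card_left_redundant_at[OF n] by simp
  finally show ?thesis .
qed

lemma right_redundant_eq_mirror:
  assumes n: "0 < n"
  shows "{b \<in> realizable n. \<exists>d<n. right_redundant_at n b d}
    = mirror n ` {b \<in> realizable n. \<exists>d<n. left_redundant_at n b d}"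
proof (intro equalityI subsetI)
  fix b assume "b \<in> {b \<in> realizable n. \<exists>d<n. right_redundant_at n b d}"
  then obtain d where b: "b \<in> realizable n" and d: "d < n" "right_redundant_at n b d" by blast
  have "n - 1 - d < n" "n - 1 - (n - 1 - d) = d" using d by auto
  then have "left_redundant_at n (mirror n b) (n - 1 - d)" using left_redundant_mirror[OF n] d by simp
  moreover have "b = mirror n (mirror n b)"
    using b by (simp add: mirror_mirror realizable_def labelings_def PiE_iff)
  ultimately show "b \<in> mirror n ` {b \<in> realizable n. \<exists>d<n. left_redundant_at n b d}"
    using mirror_realizable[OF b] \<open>n - 1 - d < n\<close> by blast
next
  fix b assume "b \<in> mirror n ` {b \<in> realizable n. \<exists>d<n. left_redundant_at n b d}"
  then obtain c d where c: "c \<in> realizable n" "b = mirror n c" and d: "d < n" "left_redundant_at n c d" by blast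
  have ext: "c \<in> extensional {..<n}" using c by (simp add: realizable_def labelings_def PiE_iff)
  have "n - 1 - d < n" "n - 1 - (n - 1 - d) = d" using d by auto
  then have "right_redundant_at n b (n - 1 - d)" using right_redundant_mirror[OF n _ ext] c d by simp
  then show "b \<in> {b \<in> realizable n. \<exists>d<n. right_redundant_at n b d}"
    using mirror_realizable c \<open>n - 1 - d < n\<close> by blast
qed

lemma card_redundant:
  assumes n: "7 \<le> n"
  shows "card (redundant n) = 10 * n"
proof -
  have n0: "0 < n" using n by simp
  define L R where "L = {b \<in> realizable n. \<exists>d<n. left_redundant_at n b d}"
    and "R = {b \<in> realizable n. \<exists>d<n. right_redundant_at n b d}"
  have "redundant n = L \<union> R" by (auto simp: redundant_def L_def R_def)
  moreover have "L \<inter> R = {}"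
    using long_left_run_not_right_redundant_at[OF n] unfolding L_def R_def left_redundant_at_def by blast
  moreover have "finite L" "finite R" using finite_realizable by (simp_all add: L_def R_def)
  moreover have "inj_on (mirror n) L"
    by (rule inj_on_inverseI[of _ "mirror n"])
      (simp add: mirror_mirror L_def realizable_def labelings_def PiE_iff)
  then have "card R = card L" unfolding R_def right_redundant_eq_mirror[OF n0] L_def[symmetric]
    by (rule card_image)
  ultimately show ?thesis using card_left_redundant[OF n] by (simp add: card_Un_disjoint L_def)
qed

lemma redundant_twin:
  assumes n: "7 \<le> n" and b: "b \<in> redundant n"
  shows "\<exists>c\<in>realizable n - redundant n. \<forall>i. window n c i = window n b i"
proof -
  have n0: "0 < n" using n by simp
  have left_twin: "\<exists>c\<in>realizable n - redundant n. \<forall>i. window n c i = window n b' i"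
    if "b' \<in> realizable n" "d < n" "left_redundant_at n b' d" for b' d
    using flip_realizable[OF n that] flip_not_redundant[OF n that] window_flip[OF n that] by blast
  have bR: "b \<in> realizable n" using b by (simp add: redundant_def)
  obtain d where d: "d < n" "left_redundant_at n b d \<or> right_redundant_at n b d"
    using b by (auto simp: redundant_def)
  show ?thesis
  proof (cases "left_redundant_at n b d")
    case True
    then show ?thesis using left_twin bR d by blast
  next
    case False
    then have "right_redundant_at n b d" using d by blast
    moreover have "n - 1 - d < n" "n - 1 - (n - 1 - d) = d" using d by auto
    ultimately have "left_redundant_at n (mirror n b) (n - 1 - d)" using left_redundant_mirror[OF n0] by simp
    then obtain c where c: "c \<in> realizable n - redundant n" "\<And>i. window n c i = window n (mirror n b) i"
      using left_twin[OF mirror_realizable[OF bR]] \<open>n - 1 - d < n\<close> by blast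
    have cext: "c \<in> extensional {..<n}" using c(1) by (simp add: realizable_def labelings_def PiE_iff)
    have "mirror n c \<in> realizable n" using c(1) mirror_realizable by blast
    moreover have "mirror n c \<notin> redundant n"
      using mirror_redundant[OF n0, of "mirror n c"] mirror_mirror[OF cext] c(1) by auto
    moreover have "window n (mirror n c) i = window n b i" for i
      using c(2) by (simp add: window_mirror[OF n0] option.map_comp comp_def option.map_ident)
    ultimately show ?thesis by blast
  qed
qed

lemma card_all_dynamics:
  assumes n: "7 \<le> n"
  shows "card (all_dynamics n) + 10 * n = card (realizable n)"
proof -
  have n0: "0 < n" using n by simp
  have "inj_on (label_dynamics n) (realizable n - redundant n)"
  proof (rule inj_onI, rule ccontr)
    fix a b assume a: "a \<in> realizable n - redundant n" and b: "b \<in> realizable n - redundant n"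
      and eq: "label_dynamics n a = label_dynamics n b" and "a \<noteq> b"
    moreover have "a \<in> labelings n" "b \<in> labelings n" using a b by (simp_all add: realizable_def)
    ultimately obtain d where "d < n" "a d \<noteq> b d"
      unfolding labelings_def using PiE_ext by blast
    then show False
      using same_windows_redundant[OF n _ _ _ \<open>d < n\<close>] eq label_dynamics_eq_iff[OF n0] a b by blast
  qed
  moreover have "\<exists>c\<in>realizable n - redundant n. label_dynamics n c = label_dynamics n b"
    if "b \<in> redundant n" for b
    using redundant_twin[OF n that] label_dynamics_eq_iff[OF n0] by blast
  ultimately have "card (label_dynamics n ` realizable n) + card (redundant n) = card (realizable n)"
    using finite_realizable by (intro card_image_Diff_redundant) (auto simp: redundant_def)
  then show ?thesis using all_dynamics_eq_label_dynamics[OF n0] card_redundant[OF n] by simp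
qed

theorem mainTheorem7:
  fixes n :: nat
  assumes "n > 6"
  shows "sensitivity n = (3 ^ n - 2 ^ (n + 1) - 10 * real n + 2) / (3 ^ n - 2 ^ (n + 1) + 2)"
proof -
  have "card (all_dynamics n) + 10 * n + 2 ^ (n + 1) = 3 ^ n + 2"
    using card_all_dynamics card_realizable assms by simp
  from arg_cong[OF this, of real]
  have "real (card (all_dynamics n)) + 10 * real n + 2 ^ (n + 1) = 3 ^ n + 2" by simp
  then show ?thesis unfolding sensitivity_def by (simp add: algebra_simps)
qed

end
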